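(* Let $L$ be a multisorted algebra in the positive quantifier-free signature. Then $L$ satisfies axioms (0), (1), (2), (3), (4) if and only if $L$ is isomorphic to a subalgebra of the positive quantifier-free algebra $A(W)$ of some set $W$.
   Context: Throughout, the Boolean prime ideal theorem is assumed. Signature. There is a sort $n$ for each natural number $n\ge 0$. For every function $\alpha\colon\{1,\dots,n\}\to\{1,\dots,k\}$ there is a unary function symbol ("substitution") $\alpha\colon n\to k$ (argument of sort $n$, value of sort $k$). For each sort $n$ there are constants $0^n,1^n$ of sort $n$ and binary operations $\vee^n,\wedge^n$ on sort $n$ (superscripts usually omitted). This is the positive quantifier-free signature. If $\alpha\colon k\to n$ and $\beta\colon n\to m$ are substitutions, $\beta\circ\alpha\colon k\to m$ denotes the substitution symbol of the composite function $\{1,\dots,k\}\to\{1,\dots,m\}$, while $\beta(\alpha(r))$ denotes composition of the operations inside an algebra. $\mathrm{id}\colon n\to n$ is the identity substitution. Concrete algebras. For a set $W$ and a substitution $\alpha\colon\{1,\dots,n\}\to\{1,\dots,k\}$ put $\alpha^{\mathrm{tuple}}\colon W^k\to W^n$, $\alpha^{\mathrm{tuple}}(x_1,\dots,x_k)=(x_{\alpha(1)},\dots,x_{\alpha(n)})$, and $\alpha^{\mathrm{relation}}\colon\mathcal P(W^n)\to\mathcal P(W^k)$, $\alpha^{\mathrm{relation}}(r)=\{\bar x\in W^k:\alpha^{\mathrm{tuple}}(\bar x)\in r\}$. The positive quantifier-free algebra $A(W)$ has sort $n$ interpreted as $\mathcal P(W^n)$, each substitution $\alpha$ interpreted as $\alpha^{\mathrm{relation}}$,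 and $0,1,\vee,\wedge$ on sort $n$ interpreted as $\emptyset, W^n,\cup,\cap$. (Note $W^0$ has exactly one element, so sort $0$ of $A(W)$ has two elements.) Subalgebras and morphisms are in the multisorted sense. Partitioning cylindrifications: given $k_1,\dots,k_m\ge 0$ and $n=k_1+\dots+k_m$, the substitutions $c_i\colon k_i\to n$ given by $c_i(l)=l+\sum_{j<i}k_j$ (so $c_i^{\mathrm{tuple}}(\bar x_1\cdots\bar x_m)=\bar x_i$). In an algebra, $x\le y$ (also written $y\ge x$) means $x=x\wedge y$. Axioms: (0) For all partitioning cylindrifications $c_1,\dots,c_m$ with $c_i\colon k_i\to k_1+\dots+k_m$, and all $r_i,s_i$ of sort $k_i$: if $\bigvee_{i=1}^m c_i(s_i)\ge\bigwedge_{i=1}^m c_i(r_i)$ then $s_i\ge r_i$ for some $i$. This includes the case $m=0$ (empty join $=0$, empty meet $=1$ in sort $0$, empty disjunction false), i.e. $0\ge 1$ fails in sort $0$. (1) In each sort, $0,1,\vee,\wedge$ form a bounded distributive lattice. (2) Every substitution preserves $0,1,\vee,\wedge$ (e.g. $\alpha(r\wedge s)=\alpha(r)\wedge\alpha(s)$). (3) For substitutions $\alpha\colon k\to n$, $\beta\colon n\to m$ and all $r$ of sort $k$: $(\beta\circ\alpha)(r)=\beta(\alpha(r))$. (4) For all $r$ of sort $n$: $\mathrm{id}(r)=r$. *)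

theory Defs
  imports Main
begin

text \<open>A substitution symbol alpha : n -> k (a function {1..n} -> {1..k}) is
  represented canonically by the list [alpha(1), ..., alpha(n)] (length n,
  entries in {1..k}); psub L alpha k is its interpretation (sort length alpha
  to sort k).\<close>

record 'a pqf_alg =
  pcar  :: "nat \<Rightarrow> 'a set"
  psub  :: "nat list \<Rightarrow> nat \<Rightarrow> 'a \<Rightarrow> 'a"
  pzero :: "nat \<Rightarrow> 'a"
  pone  :: "nat \<Rightarrow> 'a"
  pjoin :: "nat \<Rightarrow> 'a \<Rightarrow> 'a \<Rightarrow> 'a"
  pmeet :: "nat \<Rightarrow> 'a \<Rightarrow> 'a \<Rightarrow> 'a"

definition subst_sym :: "nat list \<Rightarrow> nat \<Rightarrow> bool" where
  "subst_sym \<alpha> k \<longleftrightarrow> set \<alpha> \<subseteq> {1..k}"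

definition pqf_alg :: "('a, 'b) pqf_alg_scheme \<Rightarrow> bool" where
  "pqf_alg L \<longleftrightarrow>
     (\<forall>n. pzero L n \<in> pcar L n \<and> pone L n \<in> pcar L n) \<and>
     (\<forall>n. \<forall>x\<in>pcar L n. \<forall>y\<in>pcar L n. pjoin L n x y \<in> pcar L n \<and> pmeet L n x y \<in> pcar L n) \<and>
     (\<forall>\<alpha> k. subst_sym \<alpha> k \<longrightarrow> (\<forall>r\<in>pcar L (length \<alpha>). psub L \<alpha> k r \<in> pcar L k))"

definition ple :: "('a, 'b) pqf_alg_scheme \<Rightarrow> nat \<Rightarrow> 'a \<Rightarrow> 'a \<Rightarrow> bool" where
  "ple L n x y \<longleftrightarrow> x = pmeet L n x y"

definition pbigjoin :: "('a, 'b) pqf_alg_scheme \<Rightarrow> nat \<Rightarrow> 'a list \<Rightarrow> 'a" where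
  "pbigjoin L n xs = foldr (pjoin L n) xs (pzero L n)"

definition pbigmeet :: "('a, 'b) pqf_alg_scheme \<Rightarrow> nat \<Rightarrow> 'a list \<Rightarrow> 'a" where
  "pbigmeet L n xs = foldr (pmeet L n) xs (pone L n)"

definition subst_comp :: "nat list \<Rightarrow> nat list \<Rightarrow> nat list" where
  "subst_comp \<beta> \<alpha> = map (\<lambda>i. \<beta> ! (i - 1)) \<alpha>"

definition subst_id :: "nat \<Rightarrow> nat list" where
  "subst_id n = [1..<Suc n]"

text \<open>Partitioning cylindrification c_i : k_i -> k_1+...+k_m, for ks = [k_1,...,k_m]
  and i < m (0-based list index): c_i(l) = l + sum_{j<i} k_j.\<close>
definition cyl :: "nat list \<Rightarrow> nat \<Rightarrow> nat list" where
  "cyl ks i = map (\<lambda>l. l + sum_list (take i ks)) [1..<Suc (ks ! i)]"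

definition axiom0 :: "('a, 'b) pqf_alg_scheme \<Rightarrow> bool" where
  "axiom0 L \<longleftrightarrow>
    (\<forall>ks rs ss. let m = length ks; n = sum_list ks in
      (\<forall>i<m. rs i \<in> pcar L (ks ! i) \<and> ss i \<in> pcar L (ks ! i)) \<longrightarrow>
      ple L n (pbigmeet L n (map (\<lambda>i. psub L (cyl ks i) n (rs i)) [0..<m]))
              (pbigjoin L n (map (\<lambda>i. psub L (cyl ks i) n (ss i)) [0..<m])) \<longrightarrow>
      (\<exists>i<m. ple L (ks ! i) (rs i) (ss i)))"

definition axiom1 :: "('a, 'b) pqf_alg_scheme \<Rightarrow> bool" where
  "axiom1 L \<longleftrightarrow> (\<forall>n. \<forall>x\<in>pcar L n. \<forall>y\<in>pcar L n. \<forall>z\<in>pcar L n.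
      pjoin L n x y = pjoin L n y x \<and> pmeet L n x y = pmeet L n y x \<and>
      pjoin L n (pjoin L n x y) z = pjoin L n x (pjoin L n y z) \<and>
      pmeet L n (pmeet L n x y) z = pmeet L n x (pmeet L n y z) \<and>
      pjoin L n x (pmeet L n x y) = x \<and> pmeet L n x (pjoin L n x y) = x \<and>
      pmeet L n x (pjoin L n y z) = pjoin L n (pmeet L n x y) (pmeet L n x z) \<and>
      pjoin L n x (pzero L n) = x \<and> pmeet L n x (pone L n) = x)"

definition axiom2 :: "('a, 'b) pqf_alg_scheme \<Rightarrow> bool" where
  "axiom2 L \<longleftrightarrow> (\<forall>\<alpha> k. subst_sym \<alpha> k \<longrightarrow>
      psub L \<alpha> k (pzero L (length \<alpha>)) = pzero L k \<and>
      psub L \<alpha> k (pone L (length \<alpha>)) = pone L k \<and>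
      (\<forall>r\<in>pcar L (length \<alpha>). \<forall>s\<in>pcar L (length \<alpha>).
         psub L \<alpha> k (pjoin L (length \<alpha>) r s) = pjoin L k (psub L \<alpha> k r) (psub L \<alpha> k s) \<and>
         psub L \<alpha> k (pmeet L (length \<alpha>) r s) = pmeet L k (psub L \<alpha> k r) (psub L \<alpha> k s)))"

definition axiom3 :: "('a, 'b) pqf_alg_scheme \<Rightarrow> bool" where
  "axiom3 L \<longleftrightarrow> (\<forall>\<alpha> \<beta> m. subst_sym \<alpha> (length \<beta>) \<longrightarrow> subst_sym \<beta> m \<longrightarrow>
      (\<forall>r\<in>pcar L (length \<alpha>).
         psub L (subst_comp \<beta> \<alpha>) m r = psub L \<beta> m (psub L \<alpha> (length \<beta>) r)))"

definition axiom4 :: "('a, 'b) pqf_alg_scheme \<Rightarrow> bool" where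
  "axiom4 L \<longleftrightarrow> (\<forall>n. \<forall>r\<in>pcar L n. psub L (subst_id n) n r = r)"

text \<open>The positive quantifier-free algebra A(W): sort n is the power set of W^n
  (n-tuples represented as lists of length n).\<close>
definition tuples :: "'w set \<Rightarrow> nat \<Rightarrow> 'w list set" where
  "tuples W n = {xs. length xs = n \<and> set xs \<subseteq> W}"

definition tuple_subst :: "nat list \<Rightarrow> 'w list \<Rightarrow> 'w list" where
  "tuple_subst \<alpha> xs = map (\<lambda>i. xs ! (i - 1)) \<alpha>"

definition relA :: "'w set \<Rightarrow> 'w list set pqf_alg" where
  "relA W = \<lparr> pcar = (\<lambda>n. Pow (tuples W n)),
              psub = (\<lambda>\<alpha> k r. {xs \<in> tuples W k. tuple_subst \<alpha> xs \<in> r}),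
              pzero = (\<lambda>n. {}),
              pone = (\<lambda>n. tuples W n),
              pjoin = (\<lambda>n. (\<union>)),
              pmeet = (\<lambda>n. (\<inter>)) \<rparr>"

definition subalgebra :: "('a, 'b) pqf_alg_scheme \<Rightarrow> ('a, 'c) pqf_alg_scheme \<Rightarrow> bool" where
  "subalgebra S A \<longleftrightarrow> pqf_alg S \<and>
     (\<forall>n. pcar S n \<subseteq> pcar A n) \<and>
     (\<forall>n. pzero S n = pzero A n \<and> pone S n = pone A n) \<and>
     (\<forall>n. \<forall>x\<in>pcar S n. \<forall>y\<in>pcar S n. pjoin S n x y = pjoin A n x y \<and> pmeet S n x y = pmeet A n x y) \<and>
     (\<forall>\<alpha> k. subst_sym \<alpha> k \<longrightarrow> (\<forall>r\<in>pcar S (length \<alpha>). psub S \<alpha> k r = psub A \<alpha> k r))"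

definition hom :: "(nat \<Rightarrow> 'a \<Rightarrow> 'b) \<Rightarrow> ('a, 'c) pqf_alg_scheme \<Rightarrow> ('b, 'd) pqf_alg_scheme \<Rightarrow> bool" where
  "hom h L M \<longleftrightarrow>
     (\<forall>n. h n ` pcar L n \<subseteq> pcar M n) \<and>
     (\<forall>n. h n (pzero L n) = pzero M n \<and> h n (pone L n) = pone M n) \<and>
     (\<forall>n. \<forall>x\<in>pcar L n. \<forall>y\<in>pcar L n.
        h n (pjoin L n x y) = pjoin M n (h n x) (h n y) \<and>
        h n (pmeet L n x y) = pmeet M n (h n x) (h n y)) \<and>
     (\<forall>\<alpha> k. subst_sym \<alpha> k \<longrightarrow> (\<forall>r\<in>pcar L (length \<alpha>).
        h k (psub L \<alpha> k r) = psub M \<alpha> k (h (length \<alpha>) r)))"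

definition iso :: "(nat \<Rightarrow> 'a \<Rightarrow> 'b) \<Rightarrow> ('a, 'c) pqf_alg_scheme \<Rightarrow> ('b, 'd) pqf_alg_scheme \<Rightarrow> bool" where
  "iso h L M \<longleftrightarrow> hom h L M \<and> (\<forall>n. bij_betw (h n) (pcar L n) (pcar M n))"

definition iso_to_sub_of_A :: "('a, 'c) pqf_alg_scheme \<Rightarrow> 'w set \<Rightarrow> bool" where
  "iso_to_sub_of_A L W \<longleftrightarrow>
     (\<exists>S :: 'w list set pqf_alg. \<exists>h. subalgebra S (relA W) \<and> iso h L S)"

end

theory Submission
  imports Defs
begin

text \<open>
  A subalgebra of \<open>A(W)\<close> satisfies the axioms: (1)--(4) are identities between relations, and for
  (0) tuples lying in \<open>r\<^sub>i\<close> but not in \<open>s\<^sub>i\<close> concatenate to a tuple lying in every cylindrification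
  of an \<open>r\<^sub>i\<close> but in none of an \<open>s\<^sub>i\<close>.

  Conversely, a prime filter \<open>P\<close> of sort \<open>N\<close> and a map \<open>f\<close> from \<open>W\<close> to the variables
  \<open>1..N\<close> give a homomorphism into \<open>A(W)\<close>: a tuple \<open>x\<close> lies in \<open>r\<close> iff \<open>(map f x)(r) \<in> P\<close>.
  Axiom (0) together with the prime filter theorem provides, for finitely many pairs with
  \<open>r\<^sub>i \<le> s\<^sub>i\<close> failing, one prime filter of the sum of their sorts that separates all their
  cylindrifications. Giving every pair its own fresh tuple of elements, propositional compactness
  then yields one homomorphism separating all such pairs, i.e. an embedding. When sort 1 is trivial
  one takes \<open>W = {}\<close> instead.
\<close>

section \<open>Distributive lattices and prime filters\<close>

locale distrib_lattice_on =
  fixes C :: "'a set" and join meet :: "'a \<Rightarrow> 'a \<Rightarrow> 'a" and zero one :: 'a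
  assumes zero_closed: "zero \<in> C" and one_closed: "one \<in> C"
    and join_closed: "x \<in> C \<Longrightarrow> y \<in> C \<Longrightarrow> join x y \<in> C"
    and meet_closed: "x \<in> C \<Longrightarrow> y \<in> C \<Longrightarrow> meet x y \<in> C"
    and join_comm: "x \<in> C \<Longrightarrow> y \<in> C \<Longrightarrow> join x y = join y x"
    and meet_comm: "x \<in> C \<Longrightarrow> y \<in> C \<Longrightarrow> meet x y = meet y x"
    and join_assoc: "x \<in> C \<Longrightarrow> y \<in> C \<Longrightarrow> z \<in> C \<Longrightarrow> join (join x y) z = join x (join y z)"
    and meet_assoc: "x \<in> C \<Longrightarrow> y \<in> C \<Longrightarrow> z \<in> C \<Longrightarrow> meet (meet x y) z = meet x (meet y z)"
    and join_meet_absorb: "x \<in> C \<Longrightarrow> y \<in> C \<Longrightarrow> join x (meet x y) = x"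
    and meet_join_absorb: "x \<in> C \<Longrightarrow> y \<in> C \<Longrightarrow> meet x (join x y) = x"
    and meet_join_distrib: "x \<in> C \<Longrightarrow> y \<in> C \<Longrightarrow> z \<in> C \<Longrightarrow>
      meet x (join y z) = join (meet x y) (meet x z)"
    and join_zero: "x \<in> C \<Longrightarrow> join x zero = x"
    and meet_one: "x \<in> C \<Longrightarrow> meet x one = x"
begin

definition le :: "'a \<Rightarrow> 'a \<Rightarrow> bool" where
  "le x y \<longleftrightarrow> x = meet x y"

lemma meet_idem: "x \<in> C \<Longrightarrow> meet x x = x"
  by (metis join_meet_absorb meet_join_absorb meet_closed)

lemma le_refl: "x \<in> C \<Longrightarrow> le x x"
  by (simp add: le_def meet_idem)

lemma le_trans: "x \<in> C \<Longrightarrow> y \<in> C \<Longrightarrow> z \<in> C \<Longrightarrow> le x y \<Longrightarrow> le y z \<Longrightarrow> le x z"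
  unfolding le_def by (metis meet_assoc)

lemma le_antisym: "x \<in> C \<Longrightarrow> y \<in> C \<Longrightarrow> le x y \<Longrightarrow> le y x \<Longrightarrow> x = y"
  unfolding le_def by (metis meet_comm)

lemma meet_le1: "x \<in> C \<Longrightarrow> y \<in> C \<Longrightarrow> le (meet x y) x"
  unfolding le_def by (metis meet_assoc meet_comm meet_idem)

lemma meet_le2: "x \<in> C \<Longrightarrow> y \<in> C \<Longrightarrow> le (meet x y) y"
  unfolding le_def by (simp add: meet_assoc meet_idem)

lemma le_meetI: "x \<in> C \<Longrightarrow> y \<in> C \<Longrightarrow> z \<in> C \<Longrightarrow> le z x \<Longrightarrow> le z y \<Longrightarrow> le z (meet x y)"
  unfolding le_def by (metis meet_assoc)

lemma le_iff_join: "x \<in> C \<Longrightarrow> y \<in> C \<Longrightarrow> le x y \<longleftrightarrow> y = join x y"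
  unfolding le_def by (metis join_comm join_meet_absorb meet_comm meet_join_absorb)

lemma join_le1: "x \<in> C \<Longrightarrow> y \<in> C \<Longrightarrow> le x (join x y)"
  unfolding le_def by (simp add: meet_join_absorb)

lemma join_le2: "x \<in> C \<Longrightarrow> y \<in> C \<Longrightarrow> le y (join x y)"
  using join_comm join_le1 by metis

lemma join_leI: "x \<in> C \<Longrightarrow> y \<in> C \<Longrightarrow> z \<in> C \<Longrightarrow> le x z \<Longrightarrow> le y z \<Longrightarrow> le (join x y) z"
  by (simp add: le_iff_join join_closed) (metis join_assoc)

lemma zero_le: "x \<in> C \<Longrightarrow> le zero x"
  using le_iff_join zero_closed join_comm join_zero by metis

lemma le_one: "x \<in> C \<Longrightarrow> le x one"
  by (simp add: le_def meet_one)

lemma meet_mono: "x \<in> C \<Longrightarrow> y \<in> C \<Longrightarrow> z \<in> C \<Longrightarrow> le x y \<Longrightarrow> le (meet x z) (meet y z)"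
  by (meson le_meetI meet_le1 meet_le2 le_trans meet_closed)

definition is_filter :: "'a set \<Rightarrow> bool" where
  "is_filter F \<longleftrightarrow> F \<subseteq> C \<and> one \<in> F \<and>
     (\<forall>x\<in>F. \<forall>y\<in>C. le x y \<longrightarrow> y \<in> F) \<and> (\<forall>x\<in>F. \<forall>y\<in>F. meet x y \<in> F)"

definition prime_filter :: "'a set \<Rightarrow> bool" where
  "prime_filter P \<longleftrightarrow> P \<subseteq> C \<and> one \<in> P \<and> zero \<notin> P \<and>
     (\<forall>x\<in>C. \<forall>y\<in>C. (meet x y \<in> P \<longleftrightarrow> x \<in> P \<and> y \<in> P) \<and> (join x y \<in> P \<longleftrightarrow> x \<in> P \<or> y \<in> P))"

lemma principal_filter: "a \<in> C \<Longrightarrow> is_filter {y\<in>C. le a y}"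
  unfolding is_filter_def by (auto intro: le_trans le_meetI le_one one_closed meet_closed)

lemma filter_Union_chain:
  assumes "Ch \<noteq> {}" "\<And>F. F \<in> Ch \<Longrightarrow> is_filter F" "chain\<^sub>\<subseteq> Ch"
  shows "is_filter (\<Union>Ch)"
  unfolding is_filter_def
proof (intro conjI ballI impI)
  show "\<Union>Ch \<subseteq> C" "one \<in> \<Union>Ch"
    using assms(1,2) unfolding is_filter_def by blast+
  show "y \<in> \<Union>Ch" if "x \<in> \<Union>Ch" "y \<in> C" "le x y" for x y
    using that assms(2) unfolding is_filter_def by blast
  show "meet x y \<in> \<Union>Ch" if xy: "x \<in> \<Union>Ch" "y \<in> \<Union>Ch" for x y
  proof -
    obtain F G where "F \<in> Ch" "G \<in> Ch" "x \<in> F" "y \<in> G" using xy by blast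
    moreover have "F \<subseteq> G \<or> G \<subseteq> F" using assms(3) \<open>F \<in> Ch\<close> \<open>G \<in> Ch\<close>
      unfolding chain_subset_def by blast
    ultimately show ?thesis using assms(2) unfolding is_filter_def by blast
  qed
qed

lemma filter_extend:
  assumes F: "is_filter F" and x: "x \<in> C"
  shows "is_filter {w\<in>C. \<exists>f\<in>F. le (meet f x) w}"
  unfolding is_filter_def
proof (intro conjI ballI impI)
  have FC: "F \<subseteq> C" and oneF: "one \<in> F" and meetF: "\<And>f g. f \<in> F \<Longrightarrow> g \<in> F \<Longrightarrow> meet f g \<in> F"
    using F unfolding is_filter_def by auto
  show "one \<in> {w\<in>C. \<exists>f\<in>F. le (meet f x) w}"
    using oneF x by (auto intro!: bexI[of _ one] le_one one_closed meet_closed)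
  show "meet u v \<in> {w\<in>C. \<exists>f\<in>F. le (meet f x) w}"
    if uv: "u \<in> {w\<in>C. \<exists>f\<in>F. le (meet f x) w}" "v \<in> {w\<in>C. \<exists>f\<in>F. le (meet f x) w}" for u v
  proof -
    obtain f g where fg: "u \<in> C" "v \<in> C" "f \<in> F" "g \<in> F" "le (meet f x) u" "le (meet g x) v"
      using uv by blast
    then have f: "f \<in> C" and g: "g \<in> C" using FC by auto
    have fgx: "meet (meet f g) x \<in> C" using f g x by (simp add: meet_closed)
    have "le (meet (meet f g) x) (meet f x)"
      using meet_mono[OF meet_closed[OF f g] f x meet_le1[OF f g]] .
    then have "le (meet (meet f g) x) u"
      using le_trans[OF fgx meet_closed[OF f x] fg(1)] fg(5) by blast
    moreover have "le (meet (meet f g) x) (meet g x)"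
      using meet_mono[OF meet_closed[OF f g] g x meet_le2[OF f g]] .
    then have "le (meet (meet f g) x) v"
      using le_trans[OF fgx meet_closed[OF g x] fg(2)] fg(6) by blast
    ultimately have "le (meet (meet f g) x) (meet u v)"
      using le_meetI[OF fg(1,2) fgx] by blast
    then show ?thesis using fg meetF meet_closed by blast
  qed
qed (use F x in \<open>auto simp: is_filter_def intro: le_trans meet_closed\<close>)

lemma maximal_filter_exists:
  assumes "a \<in> C" "b \<in> C" "\<not> le a b"
  shows "\<exists>F. is_filter F \<and> a \<in> F \<and> b \<notin> F \<and>
    (\<forall>G. is_filter G \<and> b \<notin> G \<and> F \<subseteq> G \<longrightarrow> G = F)"
proof -
  define \<F> where "\<F> = {F. is_filter F \<and> a \<in> F \<and> b \<notin> F}"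
  have up: "{y\<in>C. le a y} \<in> \<F>"
    using principal_filter assms le_refl unfolding \<F>_def by auto
  have "\<exists>U\<in>\<F>. \<forall>X\<in>Ch. X \<subseteq> U" if Ch: "Ch \<in> chains \<F>" for Ch
  proof (cases "Ch = {}")
    case False
    have "Ch \<subseteq> \<F>" "chain\<^sub>\<subseteq> Ch" using Ch unfolding chains_def by auto
    then have "is_filter (\<Union>Ch)" "a \<in> \<Union>Ch" "b \<notin> \<Union>Ch"
      using filter_Union_chain[OF False] False unfolding \<F>_def by blast+
    then have "\<Union>Ch \<in> \<F>" unfolding \<F>_def by blast
    then show ?thesis by blast
  qed (use up in blast)
  then obtain F where "F \<in> \<F>" and "\<forall>X\<in>\<F>. F \<subseteq> X \<longrightarrow> X = F"
    using Zorn_Lemma2[of \<F>] by blast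
  then show ?thesis unfolding \<F>_def by blast
qed

lemma maximal_filter_prime:
  assumes F: "is_filter F" and b: "b \<in> C" "b \<notin> F"
    and max: "\<And>G. is_filter G \<Longrightarrow> b \<notin> G \<Longrightarrow> F \<subseteq> G \<Longrightarrow> G = F"
  shows "prime_filter F"
proof -
  have FC: "F \<subseteq> C" and oneF: "one \<in> F" and up: "\<And>x y. x \<in> F \<Longrightarrow> y \<in> C \<Longrightarrow> le x y \<Longrightarrow> y \<in> F"
    and meetF: "\<And>x y. x \<in> F \<Longrightarrow> y \<in> F \<Longrightarrow> meet x y \<in> F"
    using F unfolding is_filter_def by auto
  have witness: "\<exists>f\<in>F. le (meet f x) b" if x: "x \<in> C" "x \<notin> F" for x
  proof (rule ccontr)
    define G where "G = {w\<in>C. \<exists>f\<in>F. le (meet f x) w}"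
    assume "\<not> (\<exists>f\<in>F. le (meet f x) b)"
    then have "b \<notin> G" unfolding G_def by blast
    moreover have "F \<subseteq> G" unfolding G_def using FC x by (auto intro: meet_le1)
    ultimately have "G = F" using max filter_extend[OF F x(1)] unfolding G_def by blast
    moreover have "x \<in> G" unfolding G_def using oneF one_closed x by (auto intro!: meet_le2)
    ultimately show False using x by blast
  qed
  have join_prime: "join x y \<notin> F" if xy: "x \<in> C" "y \<in> C" "x \<notin> F" "y \<notin> F" for x y
  proof
    assume "join x y \<in> F"
    obtain f g where fg: "f \<in> F" "g \<in> F" "le (meet f x) b" "le (meet g y) b"
      using witness xy by meson
    then have fgC: "f \<in> C" "g \<in> C" using FC by auto
    define h where "h = meet f g"
    have hC: "h \<in> C" unfolding h_def using fgC by (rule meet_closed)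
    have "meet h (join x y) \<in> F" unfolding h_def using fg \<open>join x y \<in> F\<close> meetF by blast
    moreover have "meet h (join x y) = join (meet h x) (meet h y)"
      using hC xy by (simp add: meet_join_distrib)
    moreover have "le (meet h x) b" "le (meet h y) b"
      unfolding h_def using fgC xy fg b by (meson meet_mono meet_le1 meet_le2 le_trans meet_closed)+
    ultimately have "b \<in> F" using up hC xy b by (metis join_leI meet_closed)
    then show False using b by blast
  qed
  show ?thesis
    unfolding prime_filter_def
  proof (intro conjI ballI FC oneF)
    show "zero \<notin> F" using up zero_le b by blast
    fix x y assume x: "x \<in> C" and y: "y \<in> C"
    show "(meet x y \<in> F) = (x \<in> F \<and> y \<in> F)"
      using up[OF _ x meet_le1[OF x y]] up[OF _ y meet_le2[OF x y]] meetF by blast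
    show "(join x y \<in> F) = (x \<in> F \<or> y \<in> F)"
      using up[OF _ join_closed[OF x y] join_le1[OF x y]]
        up[OF _ join_closed[OF x y] join_le2[OF x y]]
        join_prime[OF x y] by blast
  qed
qed

theorem prime_filter_separation:
  assumes "a \<in> C" "b \<in> C" "\<not> le a b"
  shows "\<exists>P. prime_filter P \<and> a \<in> P \<and> b \<notin> P"
proof -
  obtain F where "is_filter F" "a \<in> F" "b \<notin> F"
    and "\<And>G. is_filter G \<Longrightarrow> b \<notin> G \<Longrightarrow> F \<subseteq> G \<Longrightarrow> G = F"
    using maximal_filter_exists[OF assms] by blast
  then show ?thesis using maximal_filter_prime assms(2) by blast
qed

lemma foldr_meet_closed: "set xs \<subseteq> C \<Longrightarrow> foldr meet xs one \<in> C"
  by (induction xs) (auto intro: meet_closed one_closed)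

lemma foldr_join_closed: "set xs \<subseteq> C \<Longrightarrow> foldr join xs zero \<in> C"
  by (induction xs) (auto intro: join_closed zero_closed)

lemma prime_filter_foldr_meet:
  "prime_filter P \<Longrightarrow> set xs \<subseteq> C \<Longrightarrow> foldr meet xs one \<in> P \<longleftrightarrow> (\<forall>x\<in>set xs. x \<in> P)"
  by (induction xs) (auto simp: prime_filter_def foldr_meet_closed)

lemma prime_filter_foldr_join:
  "prime_filter P \<Longrightarrow> set xs \<subseteq> C \<Longrightarrow> foldr join xs zero \<in> P \<longleftrightarrow> (\<exists>x\<in>set xs. x \<in> P)"
  by (induction xs) (auto simp: prime_filter_def foldr_join_closed)

end

lemma pqf_algD:
  assumes "pqf_alg L"
  shows "pzero L n \<in> pcar L n" and "pone L n \<in> pcar L n"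
    and "x \<in> pcar L n \<Longrightarrow> y \<in> pcar L n \<Longrightarrow> pjoin L n x y \<in> pcar L n"
    and "x \<in> pcar L n \<Longrightarrow> y \<in> pcar L n \<Longrightarrow> pmeet L n x y \<in> pcar L n"
    and "subst_sym a k \<Longrightarrow> r \<in> pcar L (length a) \<Longrightarrow> psub L a k r \<in> pcar L k"
  using assms unfolding pqf_alg_def by auto

lemma pbigmeet_closed: "pqf_alg L \<Longrightarrow> set xs \<subseteq> pcar L n \<Longrightarrow> pbigmeet L n xs \<in> pcar L n"
  by (induction xs) (auto simp: pbigmeet_def pqf_algD)

lemma pbigjoin_closed: "pqf_alg L \<Longrightarrow> set xs \<subseteq> pcar L n \<Longrightarrow> pbigjoin L n xs \<in> pcar L n"
  by (induction xs) (auto simp: pbigjoin_def pqf_algD)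

lemma distrib_lattice_on_sort:
  "pqf_alg L \<Longrightarrow> axiom1 L \<Longrightarrow>
    distrib_lattice_on (pcar L n) (pjoin L n) (pmeet L n) (pzero L n) (pone L n)"
  unfolding pqf_alg_def axiom1_def by unfold_locales blast+

lemma distrib_lattice_on_le_eq_ple:
  "pqf_alg L \<Longrightarrow> axiom1 L \<Longrightarrow> distrib_lattice_on.le (pmeet L n) = ple L n"
  by (simp add: distrib_lattice_on.le_def[OF distrib_lattice_on_sort] ple_def fun_eq_iff)

section \<open>Substitutions acting on tuples\<close>

lemma length_tuple_subst [simp]: "length (tuple_subst a xs) = length a"
  by (simp add: tuple_subst_def)

lemma tuple_subst_tuples: "subst_sym a k \<Longrightarrow> xs \<in> tuples W k \<Longrightarrow> tuple_subst a xs \<in> tuples W (length a)"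
  by (fastforce simp: tuples_def tuple_subst_def subst_sym_def)

lemma length_subst_comp [simp]: "length (subst_comp b a) = length a"
  by (simp add: subst_comp_def)

lemma length_subst_id [simp]: "length (subst_id n) = n"
  by (simp add: subst_id_def)

lemma subst_comp_eq_tuple_subst: "subst_comp b a = tuple_subst a b"
  by (simp add: subst_comp_def tuple_subst_def)

lemma map_tuple_subst:
  "set a \<subseteq> {1..length xs} \<Longrightarrow> map f (tuple_subst a xs) = tuple_subst a (map f xs)"
  by (fastforce simp: tuple_subst_def)

lemma tuple_subst_subst_comp:
  "subst_sym a (length b) \<Longrightarrow> tuple_subst (subst_comp b a) xs = tuple_subst a (tuple_subst b xs)"
  by (fastforce simp: tuple_subst_def subst_comp_def subst_sym_def)

lemma subst_sym_subst_comp: "subst_sym a (length b) \<Longrightarrow> subst_sym b m \<Longrightarrow> subst_sym (subst_comp b a) m"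
  by (fastforce simp: subst_comp_def subst_sym_def)

lemma subst_sym_id: "subst_sym (subst_id n) n"
  by (auto simp: subst_sym_def subst_id_def)

lemma tuple_subst_id: "length xs = n \<Longrightarrow> tuple_subst (subst_id n) xs = xs"
  by (auto simp: tuple_subst_def subst_id_def simp del: upt_Suc intro: nth_equalityI)

lemma length_cyl [simp]: "length (cyl ks i) = ks ! i"
  by (simp add: cyl_def)

lemma subst_sym_cyl: "i < length ks \<Longrightarrow> subst_sym (cyl ks i) (sum_list ks)"
proof -
  assume i: "i < length ks"
  have "sum_list ks = sum_list (take i ks) + ks ! i + sum_list (drop (Suc i) ks)"
    using i by (metis append_take_drop_id sum_list_append take_Suc_conv_app_nth sum_list_simps
        add.right_neutral)
  then show ?thesis by (auto simp: subst_sym_def cyl_def)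
qed

lemma cyl_append: "i < length ks \<Longrightarrow> cyl (ks @ ks') i = cyl ks i"
  by (simp add: cyl_def nth_append)

lemma tuple_subst_shift:
  "set c \<subseteq> {1..} \<Longrightarrow> tuple_subst (map (\<lambda>l. l + length xs) c) (xs @ ys) = tuple_subst c ys"
  by (auto simp: tuple_subst_def nth_append intro!: map_cong)

lemma tuple_subst_cyl_concat:
  "i < length xss \<Longrightarrow> tuple_subst (cyl (map length xss) i) (concat xss) = xss ! i"
proof (induction xss arbitrary: i)
  case (Cons xs xss)
  show ?case
  proof (cases i)
    case 0
    then show ?thesis
      by (auto simp: cyl_def tuple_subst_def nth_append simp del: upt_Suc intro: nth_equalityI)
  next
    case (Suc j)
    have "cyl (map length (xs # xss)) (Suc j) = map (\<lambda>l. l + length xs) (cyl (map length xss) j)"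
      by (simp add: cyl_def algebra_simps)
    moreover have "set (cyl (map length xss) j) \<subseteq> {1..}" by (auto simp: cyl_def)
    ultimately show ?thesis using Cons Suc by (simp add: tuple_subst_shift)
  qed
qed simp

lemma tuple_cyl_concat:
  assumes "\<And>i. i < length ks \<Longrightarrow> x i \<in> tuples W (ks ! i)"
  shows "\<exists>y\<in>tuples W (sum_list ks). \<forall>i<length ks. tuple_subst (cyl ks i) y = x i"
proof
  define xss where "xss = map x [0..<length ks]"
  have ks: "map length xss = ks" using assms by (auto simp: xss_def tuples_def intro: nth_equalityI)
  show "\<forall>i<length ks. tuple_subst (cyl ks i) (concat xss) = x i"
    using tuple_subst_cyl_concat[of _ xss] unfolding ks[symmetric] by (simp add: xss_def)
  have "set (concat xss) \<subseteq> W" using assms by (fastforce simp: xss_def tuples_def)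
  then show "concat xss \<in> tuples W (sum_list ks)"
    unfolding ks[symmetric] by (simp add: tuples_def length_concat)
qed

lemma position_function:
  assumes "distinct y"
  obtains f where "\<And>e. f e \<in> {1..Suc (length y)}" and "map f y = subst_id (length y)"
proof
  define f where
    "f e = (if e \<in> set y then Suc (the_inv_into {..<length y} ((!) y) e) else Suc (length y))" for e
  have inj: "inj_on ((!) y) {..<length y}" using inj_on_nth[OF assms] by simp
  have f_nth: "f (y ! p) = Suc p" if "p < length y" for p
    using the_inv_into_f_f[OF inj] that by (simp add: f_def)
  show "f e \<in> {1..Suc (length y)}" for e
  proof (cases "e \<in> set y")
    case True
    then obtain p where "p < length y" "e = y ! p" by (auto simp: in_set_conv_nth)
    then show ?thesis using f_nth by simp
  qed (simp add: f_def)
  show "map f y = subst_id (length y)"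
    by (rule nth_equalityI) (simp_all add: f_nth subst_id_def del: upt_Suc)
qed

lemma tuple_subst_subst_id: "subst_sym c n \<Longrightarrow> tuple_subst c (subst_id n) = c"
  by (auto simp: tuple_subst_def subst_id_def subst_sym_def nth_equalityI simp del: upt_Suc
      intro!: map_idI)

section \<open>Embeddings into \<open>A(W)\<close>\<close>

locale rel_embedding =
  fixes L :: "('a, 'b) pqf_alg_scheme" and W :: "'w set" and h :: "nat \<Rightarrow> 'a \<Rightarrow> 'w list set"
  assumes alg: "pqf_alg L" and hom: "hom h L (relA W)" and inj: "inj_on (h n) (pcar L n)"
begin

lemma h_subset: "x \<in> pcar L n \<Longrightarrow> h n x \<subseteq> tuples W n"
  using hom by (auto simp: hom_def relA_def)

lemma h_zero [simp]: "h n (pzero L n) = {}"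
  and h_one [simp]: "h n (pone L n) = tuples W n"
  and h_join [simp]: "x \<in> pcar L n \<Longrightarrow> y \<in> pcar L n \<Longrightarrow> h n (pjoin L n x y) = h n x \<union> h n y"
  and h_meet [simp]: "x \<in> pcar L n \<Longrightarrow> y \<in> pcar L n \<Longrightarrow> h n (pmeet L n x y) = h n x \<inter> h n y"
  and h_psub [simp]: "subst_sym a k \<Longrightarrow> r \<in> pcar L (length a) \<Longrightarrow>
    h k (psub L a k r) = {xs \<in> tuples W k. tuple_subst a xs \<in> h (length a) r}"
  using hom by (auto simp: hom_def relA_def)

lemma eq_if_h_eq: "h n x = h n y \<Longrightarrow> x \<in> pcar L n \<Longrightarrow> y \<in> pcar L n \<Longrightarrow> x = y"
  using inj by (rule inj_onD)

lemma ple_iff_subset: "x \<in> pcar L n \<Longrightarrow> y \<in> pcar L n \<Longrightarrow> ple L n x y \<longleftrightarrow> h n x \<subseteq> h n y"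
proof -
  assume x: "x \<in> pcar L n" and y: "y \<in> pcar L n"
  have "ple L n x y \<longleftrightarrow> h n x = h n (pmeet L n x y)"
    unfolding ple_def using eq_if_h_eq[of n x "pmeet L n x y"] pqf_algD(4)[OF alg x y] x by metis
  also have "\<dots> \<longleftrightarrow> h n x \<subseteq> h n y" using x y by auto
  finally show ?thesis .
qed

lemma h_pbigmeet: "set xs \<subseteq> pcar L n \<Longrightarrow> h n (pbigmeet L n xs) = tuples W n \<inter> \<Inter>(h n ` set xs)"
  by (induction xs) (auto simp: pbigmeet_def pbigmeet_closed[OF alg, unfolded pbigmeet_def])

lemma h_pbigjoin: "set xs \<subseteq> pcar L n \<Longrightarrow> h n (pbigjoin L n xs) = \<Union>(h n ` set xs)"
  by (induction xs) (auto simp: pbigjoin_def pbigjoin_closed[OF alg, unfolded pbigjoin_def])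

lemma axiom0: "axiom0 L"
  unfolding axiom0_def Let_def
proof (intro allI impI)
  fix ks :: "nat list" and rs ss
  define n where "n = sum_list ks"
  define cyl_rs where "cyl_rs = map (\<lambda>i. psub L (cyl ks i) n (rs i)) [0..<length ks]"
  define cyl_ss where "cyl_ss = map (\<lambda>i. psub L (cyl ks i) n (ss i)) [0..<length ks]"
  assume car: "\<forall>i<length ks. rs i \<in> pcar L (ks ! i) \<and> ss i \<in> pcar L (ks ! i)"
  then have cyl_closed: "set cyl_rs \<subseteq> pcar L n" "set cyl_ss \<subseteq> pcar L n"
    using pqf_algD(5)[OF alg subst_sym_cyl] unfolding cyl_rs_def cyl_ss_def n_def by auto
  assume "ple L (sum_list ks)
    (pbigmeet L (sum_list ks) (map (\<lambda>i. psub L (cyl ks i) (sum_list ks) (rs i)) [0..<length ks]))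
    (pbigjoin L (sum_list ks) (map (\<lambda>i. psub L (cyl ks i) (sum_list ks) (ss i)) [0..<length ks]))"
  then have below: "tuples W n \<inter> \<Inter>(h n ` set cyl_rs) \<subseteq> \<Union>(h n ` set cyl_ss)"
    using cyl_closed ple_iff_subset pbigmeet_closed[OF alg] pbigjoin_closed[OF alg]
    by (simp add: h_pbigmeet h_pbigjoin cyl_rs_def cyl_ss_def n_def)
  show "\<exists>i<length ks. ple L (ks ! i) (rs i) (ss i)"
  proof (rule ccontr)
    assume "\<not> ?thesis"
    then have "\<forall>i<length ks. \<exists>x. x \<in> h (ks ! i) (rs i) - h (ks ! i) (ss i)"
      using car by (auto simp: ple_iff_subset)
    then obtain x where x: "\<And>i. i < length ks \<Longrightarrow> x i \<in> h (ks ! i) (rs i) - h (ks ! i) (ss i)"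
      unfolding choice_iff' by blast
    then obtain y where y: "y \<in> tuples W n"
      and cyl: "\<And>i. i < length ks \<Longrightarrow> tuple_subst (cyl ks i) y = x i"
      using tuple_cyl_concat[of ks x W] h_subset car unfolding n_def by blast
    have h_cyl: "y \<in> h n (psub L (cyl ks i) n (f i)) \<longleftrightarrow> x i \<in> h (ks ! i) (f i)"
      if "i < length ks" "f i \<in> pcar L (ks ! i)" for i f
      using y cyl[OF that(1)] subst_sym_cyl[OF that(1)] that(2) by (simp add: n_def)
    have "y \<in> tuples W n \<inter> \<Inter>(h n ` set cyl_rs)"
      using y h_cyl x car by (auto simp: cyl_rs_def)
    then obtain i where "i < length ks" "y \<in> h n (psub L (cyl ks i) n (ss i))"
      using below by (auto simp: cyl_ss_def)
    then show False using h_cyl x car by blast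
  qed
qed

lemma axiom1: "axiom1 L"
  unfolding axiom1_def
proof (intro allI ballI)
  fix n x y z assume x: "x \<in> pcar L n" and y: "y \<in> pcar L n" and z: "z \<in> pcar L n"
  note closed = x y z pqf_algD[OF alg]
  show "pjoin L n x y = pjoin L n y x \<and> pmeet L n x y = pmeet L n y x \<and>
      pjoin L n (pjoin L n x y) z = pjoin L n x (pjoin L n y z) \<and>
      pmeet L n (pmeet L n x y) z = pmeet L n x (pmeet L n y z) \<and>
      pjoin L n x (pmeet L n x y) = x \<and> pmeet L n x (pjoin L n x y) = x \<and>
      pmeet L n x (pjoin L n y z) = pjoin L n (pmeet L n x y) (pmeet L n x z) \<and>
      pjoin L n x (pzero L n) = x \<and> pmeet L n x (pone L n) = x"
    by (intro conjI; rule eq_if_h_eq[of n]) (use h_subset[OF x] in \<open>auto simp: closed\<close>)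
qed

lemma axiom2: "axiom2 L"
  unfolding axiom2_def
proof (intro allI impI conjI ballI)
  fix a k assume a: "subst_sym a k"
  note closed = a pqf_algD[OF alg]
  show "psub L a k (pzero L (length a)) = pzero L k"
    by (rule eq_if_h_eq[of k]) (simp_all add: closed)
  show "psub L a k (pone L (length a)) = pone L k"
    using tuple_subst_tuples[OF a] by (intro eq_if_h_eq[of k]) (auto simp: closed)
  fix r s assume "r \<in> pcar L (length a)" "s \<in> pcar L (length a)"
  note closed = closed this
  show "psub L a k (pjoin L (length a) r s) = pjoin L k (psub L a k r) (psub L a k s)"
    and "psub L a k (pmeet L (length a) r s) = pmeet L k (psub L a k r) (psub L a k s)"
    by (rule eq_if_h_eq[of k]; auto simp: closed)+
qed

lemma axiom3: "axiom3 L"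
  unfolding axiom3_def
proof (intro allI impI ballI)
  fix a b m r
  assume a: "subst_sym a (length b)" and b: "subst_sym b m" and r: "r \<in> pcar L (length a)"
  then show "psub L (subst_comp b a) m r = psub L b m (psub L a (length b) r)"
    using subst_sym_subst_comp[OF a b] tuple_subst_tuples[OF b]
    by (intro eq_if_h_eq[of m]) (auto simp: pqf_algD[OF alg] tuple_subst_subst_comp)
qed

lemma axiom4: "axiom4 L"
  unfolding axiom4_def
proof (intro allI ballI)
  fix n r assume r: "r \<in> pcar L n"
  then show "psub L (subst_id n) n r = r"
    using h_subset[OF r] subst_sym_id[of n]
    by (intro eq_if_h_eq[of n]) (auto simp: pqf_algD[OF alg] tuple_subst_id tuples_def)
qed

lemma satisfies_axioms: "axiom0 L \<and> axiom1 L \<and> axiom2 L \<and> axiom3 L \<and> axiom4 L"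
  using axiom0 axiom1 axiom2 axiom3 axiom4 by blast

end

lemma pqf_alg_hom_image:
  assumes "pqf_alg L" "hom h L S" "\<And>n. pcar S n = h n ` pcar L n"
  shows "pqf_alg S"
  using assms unfolding pqf_alg_def hom_def by (smt (verit) image_iff)

lemma iso_to_sub_of_A_iff_rel_embedding:
  fixes W :: "'w set"
  assumes "pqf_alg L"
  shows "iso_to_sub_of_A L W \<longleftrightarrow> (\<exists>h. rel_embedding L W h)"
proof
  assume "iso_to_sub_of_A L W"
  then obtain S :: "'w list set pqf_alg" and h where S: "subalgebra S (relA W)" and h: "iso h L S"
    unfolding iso_to_sub_of_A_def by blast
  have "h n x \<in> pcar S n" if "x \<in> pcar L n" for n x
    using h that unfolding iso_def hom_def by blast
  then have "hom h L (relA W)"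
    using S h unfolding subalgebra_def iso_def hom_def by (simp add: subset_iff)
  moreover have "inj_on (h n) (pcar L n)" for n
    using h unfolding iso_def bij_betw_def by blast
  ultimately show "\<exists>h. rel_embedding L W h" using assms by (auto simp: rel_embedding_def)
next
  assume "\<exists>h. rel_embedding L W h"
  then obtain h where hom: "hom h L (relA W)" and inj: "\<And>n. inj_on (h n) (pcar L n)"
    unfolding rel_embedding_def by blast
  define S :: "'w list set pqf_alg" where "S = relA W \<lparr>pcar := \<lambda>n. h n ` pcar L n\<rparr>"
  have "iso h L S"
    using hom inj unfolding iso_def hom_def bij_betw_def S_def by (simp add: relA_def)
  moreover have "pqf_alg S"
    by (rule pqf_alg_hom_image[OF assms]) (use \<open>iso h L S\<close> in \<open>simp_all add: iso_def S_def\<close>)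
  then have "subalgebra S (relA W)"
    using hom by (auto simp: subalgebra_def hom_def S_def)
  ultimately show "iso_to_sub_of_A L W" unfolding iso_to_sub_of_A_def by blast
qed

section \<open>Propositional compactness\<close>

definition fin_sat :: "(('t \<Rightarrow> bool) \<Rightarrow> bool) \<Rightarrow> ('t \<times> bool) set \<Rightarrow> bool" where
  "fin_sat Mod \<Phi> \<longleftrightarrow> (\<forall>\<Psi>\<subseteq>\<Phi>. finite \<Psi> \<longrightarrow> (\<exists>N. Mod N \<and> (\<forall>p\<in>\<Psi>. N (fst p) = snd p)))"

lemma fin_satD: "fin_sat Mod \<Phi> \<Longrightarrow> \<Psi> \<subseteq> \<Phi> \<Longrightarrow> finite \<Psi> \<Longrightarrow> \<exists>N. Mod N \<and> (\<forall>p\<in>\<Psi>. N (fst p) = snd p)"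
  unfolding fin_sat_def by blast

lemma fin_sat_maximal_extension:
  assumes "fin_sat Mod \<Phi>"
  shows "\<exists>D. \<Phi> \<subseteq> D \<and> fin_sat Mod D \<and> (\<forall>p. fin_sat Mod (insert p D) \<longrightarrow> p \<in> D)"
proof -
  define \<Z> where "\<Z> = {D. \<Phi> \<subseteq> D \<and> fin_sat Mod D}"
  have "\<forall>Ch\<in>chains \<Z>. \<exists>U\<in>\<Z>. \<forall>X\<in>Ch. X \<subseteq> U"
  proof
    fix Ch assume "Ch \<in> chains \<Z>"
    then have Ch: "Ch \<subseteq> \<Z>" "subset.chain \<Z> Ch" unfolding chains_alt_def subset_chain_def by auto
    have "fin_sat Mod (\<Phi> \<union> \<Union>Ch)"
      unfolding fin_sat_def
    proof (intro allI impI)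
      fix \<Psi> assume \<Psi>: "\<Psi> \<subseteq> \<Phi> \<union> \<Union>Ch" "finite \<Psi>"
      show "\<exists>N. Mod N \<and> (\<forall>p\<in>\<Psi>. N (fst p) = snd p)"
      proof (cases "Ch = {}")
        case True
        then show ?thesis using fin_satD[OF assms] \<Psi> by simp
      next
        case False
        then have "\<Phi> \<subseteq> \<Union>Ch" using Ch(1) unfolding \<Z>_def by blast
        then obtain D where "D \<in> Ch" "\<Psi> \<subseteq> D"
          using finite_subset_Union_chain[OF \<Psi>(2) _ False Ch(2)] \<Psi>(1) by blast
        moreover have "fin_sat Mod D" using \<open>D \<in> Ch\<close> Ch(1) unfolding \<Z>_def by blast
        ultimately show ?thesis using fin_satD \<Psi>(2) by blast
      qed
    qed
    then show "\<exists>U\<in>\<Z>. \<forall>X\<in>Ch. X \<subseteq> U"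
      by (intro bexI[of _ "\<Phi> \<union> \<Union>Ch"]) (auto simp: \<Z>_def)
  qed
  then obtain D where D: "D \<in> \<Z>" and max: "\<forall>X\<in>\<Z>. D \<subseteq> X \<longrightarrow> X = D"
    using Zorn_Lemma2 by blast
  have "p \<in> D" if "fin_sat Mod (insert p D)" for p
  proof -
    have "insert p D \<in> \<Z>" using D that unfolding \<Z>_def by blast
    then show ?thesis using max by blast
  qed
  then show ?thesis using D unfolding \<Z>_def by blast
qed

lemma fin_sat_maximal_decides:
  assumes D: "fin_sat Mod D" and max: "\<forall>p. fin_sat Mod (insert p D) \<longrightarrow> p \<in> D"
  shows "(a, True) \<in> D \<or> (a, False) \<in> D"
proof (rule ccontr)
  assume none: "\<not> ?thesis"
  have "\<forall>b. \<exists>\<Psi>. \<Psi> \<subseteq> insert (a, b) D \<and> finite \<Psi> \<and> \<not> (\<exists>N. Mod N \<and> (\<forall>p\<in>\<Psi>. N (fst p) = snd p))"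
  proof
    fix b
    have "(a, b) \<notin> D" using none by (cases b) auto
    then have "\<not> fin_sat Mod (insert (a, b) D)" using max by blast
    then show "\<exists>\<Psi>. \<Psi> \<subseteq> insert (a, b) D \<and> finite \<Psi> \<and> \<not> (\<exists>N. Mod N \<and> (\<forall>p\<in>\<Psi>. N (fst p) = snd p))"
      unfolding fin_sat_def by blast
  qed
  then obtain \<Psi> where "\<forall>b. \<Psi> b \<subseteq> insert (a, b) D \<and> finite (\<Psi> b) \<and>
      \<not> (\<exists>N. Mod N \<and> (\<forall>p\<in>\<Psi> b. N (fst p) = snd p))"
    by (rule choice[THEN exE])
  then have \<Psi>: "\<And>b. \<Psi> b \<subseteq> insert (a, b) D" "\<And>b. finite (\<Psi> b)"
    and unsat: "\<And>b. \<not> (\<exists>N. Mod N \<and> (\<forall>p\<in>\<Psi> b. N (fst p) = snd p))"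
    by blast+
  have "(\<Psi> True \<union> \<Psi> False) - {(a, True), (a, False)} \<subseteq> D" using \<Psi>(1) by blast
  then obtain N where N: "Mod N"
    "\<forall>p\<in>(\<Psi> True \<union> \<Psi> False) - {(a, True), (a, False)}. N (fst p) = snd p"
    using fin_satD[OF D] \<Psi>(2) by blast
  have "\<forall>p\<in>\<Psi> (N a). N (fst p) = snd p"
  proof
    fix p assume p: "p \<in> \<Psi> (N a)"
    show "N (fst p) = snd p"
    proof (cases "p = (a, N a)")
      case False
      then have "p \<in> D" using p \<Psi>(1) by blast
      then have "p \<notin> {(a, True), (a, False)}" using none by blast
      moreover have "p \<in> \<Psi> True \<union> \<Psi> False" using p by (cases "N a") auto
      ultimately show ?thesis using N(2) by blast
    qed simp
  qed
  then show False using unsat N(1) by blast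
qed

theorem compactness:
  assumes closed: "\<And>V. (\<And>A. finite A \<Longrightarrow> \<exists>N. Mod N \<and> (\<forall>a\<in>A. N a = V a)) \<Longrightarrow> Mod V"
    and "fin_sat Mod \<Phi>"
  shows "\<exists>V. Mod V \<and> (\<forall>p\<in>\<Phi>. V (fst p) = snd p)"
proof -
  obtain D where "\<Phi> \<subseteq> D" and D: "fin_sat Mod D" and max: "\<forall>p. fin_sat Mod (insert p D) \<longrightarrow> p \<in> D"
    using fin_sat_maximal_extension[OF assms(2)] by blast
  define V where "V a \<longleftrightarrow> (a, True) \<in> D" for a
  have consistent: "\<not> ((a, True) \<in> D \<and> (a, False) \<in> D)" for a
  proof
    assume "(a, True) \<in> D \<and> (a, False) \<in> D"
    then have "{(a, True), (a, False)} \<subseteq> D" by blast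
    from fin_satD[OF D this] obtain N where "\<forall>p\<in>{(a, True), (a, False)}. N (fst p) = snd p"
      by auto
    then show False by simp
  qed
  have V_in_D: "(a, V a) \<in> D" for a
    using fin_sat_maximal_decides[OF D max] unfolding V_def by (cases "(a, True) \<in> D") auto
  have "Mod V"
  proof (rule closed)
    fix A :: "'a set" assume "finite A"
    moreover have "(\<lambda>a. (a, V a)) ` A \<subseteq> D" using V_in_D by blast
    ultimately obtain N where "Mod N" "\<forall>p\<in>(\<lambda>a. (a, V a)) ` A. N (fst p) = snd p"
      using fin_satD[OF D] by blast
    then show "\<exists>N. Mod N \<and> (\<forall>a\<in>A. N a = V a)" by auto
  qed
  moreover have "V (fst p) = snd p" if "p \<in> \<Phi>" for p
    using that \<open>\<Phi> \<subseteq> D\<close> consistent[of "fst p"] unfolding V_def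
    by (cases p) (cases "snd p"; auto)
  ultimately show ?thesis by blast
qed

text \<open>\<open>M x r\<close> says that the tuple \<open>x\<close> lies in the relation \<open>r\<close>. This is a homomorphism into \<open>A(W)\<close>
  written pointwise, the form in which it survives the compactness argument.\<close>

definition pqf_model :: "('a, 'b) pqf_alg_scheme \<Rightarrow> 'e set \<Rightarrow> ('e list \<Rightarrow> 'a \<Rightarrow> bool) \<Rightarrow> bool" where
  "pqf_model L W M \<longleftrightarrow> (\<forall>x. set x \<subseteq> W \<longrightarrow>
     M x (pone L (length x)) \<and> \<not> M x (pzero L (length x)) \<and>
     (\<forall>r\<in>pcar L (length x). \<forall>s\<in>pcar L (length x).
        (M x (pjoin L (length x) r s) \<longleftrightarrow> M x r \<or> M x s) \<and>
        (M x (pmeet L (length x) r s) \<longleftrightarrow> M x r \<and> M x s)) \<and>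
     (\<forall>a. subst_sym a (length x) \<longrightarrow> (\<forall>r\<in>pcar L (length a).
        M (tuple_subst a x) r \<longleftrightarrow> M x (psub L a (length x) r))))"

lemma pqf_modelD:
  assumes "pqf_model L W M" "set x \<subseteq> W"
  shows "M x (pone L (length x))" "\<not> M x (pzero L (length x))"
    and "r \<in> pcar L (length x) \<Longrightarrow> s \<in> pcar L (length x) \<Longrightarrow>
      M x (pjoin L (length x) r s) \<longleftrightarrow> M x r \<or> M x s"
    and "r \<in> pcar L (length x) \<Longrightarrow> s \<in> pcar L (length x) \<Longrightarrow>
      M x (pmeet L (length x) r s) \<longleftrightarrow> M x r \<and> M x s"
    and "subst_sym a (length x) \<Longrightarrow> r \<in> pcar L (length a) \<Longrightarrow>
      M (tuple_subst a x) r \<longleftrightarrow> M x (psub L a (length x) r)"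
  using assms unfolding pqf_model_def by blast+

lemma hom_pqf_model:
  assumes "pqf_model L W M"
  shows "hom (\<lambda>n r. {x \<in> tuples W n. M x r}) L (relA W)"
proof -
  have M: "M x (pone L n)" "\<not> M x (pzero L n)"
    "r \<in> pcar L n \<Longrightarrow> s \<in> pcar L n \<Longrightarrow> M x (pjoin L n r s) \<longleftrightarrow> M x r \<or> M x s"
    "r \<in> pcar L n \<Longrightarrow> s \<in> pcar L n \<Longrightarrow> M x (pmeet L n r s) \<longleftrightarrow> M x r \<and> M x s"
    "subst_sym a n \<Longrightarrow> r \<in> pcar L (length a) \<Longrightarrow> M (tuple_subst a x) r \<longleftrightarrow> M x (psub L a n r)"
    if "x \<in> tuples W n" for x n r s a
    using pqf_modelD[OF assms, of x] that unfolding tuples_def by auto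
  show ?thesis
    unfolding hom_def relA_def using tuple_subst_tuples by (auto simp: M)
qed

lemma rel_embedding_of_separating_model:
  assumes alg: "pqf_alg L" and "axiom1 L" and model: "pqf_model L W M"
    and sep: "\<And>n r s. r \<in> pcar L n \<Longrightarrow> s \<in> pcar L n \<Longrightarrow> \<not> ple L n r s \<Longrightarrow>
      \<exists>x\<in>tuples W n. M x r \<and> \<not> M x s"
  shows "rel_embedding L W (\<lambda>n r. {x \<in> tuples W n. M x r})"
proof
  fix n
  interpret distrib_lattice_on "pcar L n" "pjoin L n" "pmeet L n" "pzero L n" "pone L n"
    using distrib_lattice_on_sort[OF assms(1,2)] .
  show "inj_on (\<lambda>r. {x \<in> tuples W n. M x r}) (pcar L n)"
  proof (rule inj_onI)
    fix r s assume rs: "r \<in> pcar L n" "s \<in> pcar L n"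
      "{x \<in> tuples W n. M x r} = {x \<in> tuples W n. M x s}"
    then have "ple L n r s" "ple L n s r" using sep[of r n s] sep[of s n r] by blast+
    then show "r = s" using le_antisym rs distrib_lattice_on_le_eq_ple[OF assms(1,2)] by metis
  qed
qed (use alg hom_pqf_model[OF model] in auto)

lemma pqf_model_local:
  assumes local: "\<And>A. finite A \<Longrightarrow> \<exists>N. pqf_model L W (\<lambda>x r. N (x, r)) \<and> (\<forall>p\<in>A. N p = V p)"
  shows "pqf_model L W (\<lambda>x r. V (x, r))"
  unfolding pqf_model_def
proof (intro allI impI conjI ballI)
  fix x assume x: "set x \<subseteq> W"
  obtain N where "pqf_model L W (\<lambda>x r. N (x, r))"
    "\<forall>p\<in>{(x, pone L (length x)), (x, pzero L (length x))}. N p = V p"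
    using local[of "{(x, pone L (length x)), (x, pzero L (length x))}"] by blast
  then show "V (x, pone L (length x))" "\<not> V (x, pzero L (length x))"
    using pqf_modelD(1,2)[OF _ x] by auto
  fix r s assume rs: "r \<in> pcar L (length x)" "s \<in> pcar L (length x)"
  obtain N where "pqf_model L W (\<lambda>x r. N (x, r))"
     "\<forall>p\<in>{(x, pjoin L (length x) r s), (x, pmeet L (length x) r s), (x, r), (x, s)}. N p = V p"
    using local[of "{(x, pjoin L (length x) r s), (x, pmeet L (length x) r s), (x, r), (x, s)}"]
    by blast
  then show "V (x, pjoin L (length x) r s) = (V (x, r) \<or> V (x, s))"
    and "V (x, pmeet L (length x) r s) = (V (x, r) \<and> V (x, s))"
    using pqf_modelD(3,4)[OF _ x rs] by auto
next
  fix x a r assume x: "set x \<subseteq> W" and a: "subst_sym a (length x)" and r: "r \<in> pcar L (length a)"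
  obtain N where "pqf_model L W (\<lambda>x r. N (x, r))"
     "\<forall>p\<in>{(tuple_subst a x, r), (x, psub L a (length x) r)}. N p = V p"
    using local[of "{(tuple_subst a x, r), (x, psub L a (length x) r)}"] by blast
  then show "V (tuple_subst a x, r) = V (x, psub L a (length x) r)"
    using pqf_modelD(5)[OF _ x a r] by auto
qed

section \<open>Witness tuples\<close>

text \<open>\<open>(n, r, s)\<close> and \<open>j\<close> can be read off the residues mod 3 of the second components, so the
  witness tuples are repetition-free and pairwise disjoint.\<close>

definition witness_code :: "nat \<times> 'a \<times> 'a \<Rightarrow> nat \<Rightarrow> ('a \<times> nat) set" where
  "witness_code = (\<lambda>(n, r, s) j. {(r, 3 * n), (s, 3 * n + 1), (r, 3 * j + 2)})"

definition witness_tuple :: "nat \<times> 'a \<times> 'a \<Rightarrow> ('a \<times> nat) set list" where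
  "witness_tuple q = map (witness_code q) [0..<fst q]"

definition witness_literals :: "nat \<times> 'a \<times> 'a \<Rightarrow> ((('a \<times> nat) set list \<times> 'a) \<times> bool) set" where
  "witness_literals = (\<lambda>(n, r, s).
     {((witness_tuple (n, r, s), r), True), ((witness_tuple (n, r, s), s), False)})"

lemma witness_code_inj:
  assumes "witness_code q j = witness_code q' j'"
  shows "q = q' \<and> j = j'"
proof -
  obtain n r s n' r' s' where q: "q = (n, r, s)" "q' = (n', r', s')" by (cases q, cases q')
  have "(r, 3 * n) \<in> witness_code q j" "(s, 3 * n + 1) \<in> witness_code q j"
    "(r, 3 * j + 2) \<in> witness_code q j"
    by (simp_all add: q witness_code_def)
  then have "(r, 3 * n) \<in> {(r', 3 * n'), (s', 3 * n' + 1), (r', 3 * j' + 2)}"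
    "(s, 3 * n + 1) \<in> {(r', 3 * n'), (s', 3 * n' + 1), (r', 3 * j' + 2)}"
    "(r, 3 * j + 2) \<in> {(r', 3 * n'), (s', 3 * n' + 1), (r', 3 * j' + 2)}"
    unfolding assms by (simp_all add: q witness_code_def)
  moreover have "3 * a \<noteq> 3 * b + 1 \<and> 3 * a \<noteq> 3 * b + 2 \<and> 3 * a + 1 \<noteq> 3 * b + 2" for a b :: nat
    by presburger
  ultimately have "r = r' \<and> n = n'" "s = s'" "j = j'"
    by (auto dest: sym)
  then show ?thesis using q by simp
qed

lemma length_witness_tuple [simp]: "length (witness_tuple q) = fst q"
  by (simp add: witness_tuple_def)

lemma witness_tuple_disjoint: "e \<in> set (witness_tuple q) \<Longrightarrow> e \<in> set (witness_tuple q') \<Longrightarrow> q = q'"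
  by (auto simp: witness_tuple_def dest: witness_code_inj)

lemma distinct_witness_tuple: "distinct (witness_tuple q)"
  by (auto simp: witness_tuple_def distinct_map inj_on_def dest: witness_code_inj)

lemma distinct_concat_witness_tuples: "distinct qs \<Longrightarrow> distinct (concat (map witness_tuple qs))"
  by (induction qs) (auto simp: distinct_witness_tuple dest: witness_tuple_disjoint)

section \<open>Algebras satisfying the axioms\<close>

locale pqf_axioms =
  fixes L :: "('a, 'b) pqf_alg_scheme"
  assumes alg: "pqf_alg L" and ax0: "axiom0 L" and ax1: "axiom1 L" and ax2: "axiom2 L"
    and ax3: "axiom3 L" and ax4: "axiom4 L"
begin

sublocale sort: distrib_lattice_on "pcar L n" "pjoin L n" "pmeet L n" "pzero L n" "pone L n" for n
  by (rule distrib_lattice_on_sort[OF alg ax1])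

lemma sort_le [simp]: "sort.le n = ple L n"
  by (rule distrib_lattice_on_le_eq_ple[OF alg ax1])

lemmas closed = pqf_algD[OF alg]

lemma psub_zero: "subst_sym a k \<Longrightarrow> psub L a k (pzero L (length a)) = pzero L k"
  and psub_one: "subst_sym a k \<Longrightarrow> psub L a k (pone L (length a)) = pone L k"
  and psub_join: "subst_sym a k \<Longrightarrow> r \<in> pcar L (length a) \<Longrightarrow> s \<in> pcar L (length a) \<Longrightarrow>
     psub L a k (pjoin L (length a) r s) = pjoin L k (psub L a k r) (psub L a k s)"
  and psub_meet: "subst_sym a k \<Longrightarrow> r \<in> pcar L (length a) \<Longrightarrow> s \<in> pcar L (length a) \<Longrightarrow>
     psub L a k (pmeet L (length a) r s) = pmeet L k (psub L a k r) (psub L a k s)"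
  using ax2 unfolding axiom2_def by auto

lemma psub_subst_comp: "subst_sym a (length b) \<Longrightarrow> subst_sym b m \<Longrightarrow> r \<in> pcar L (length a) \<Longrightarrow>
    psub L (subst_comp b a) m r = psub L b m (psub L a (length b) r)"
  using ax3 unfolding axiom3_def by auto

lemma psub_Nil: "t \<in> pcar L 0 \<Longrightarrow> psub L [] 0 t = t"
  using ax4[unfolded axiom4_def, rule_format, of t 0] by (simp add: subst_id_def)

lemma axiom0D:
  assumes "\<And>i. i < length ks \<Longrightarrow> rs i \<in> pcar L (ks ! i) \<and> ss i \<in> pcar L (ks ! i)"
    and "ple L (sum_list ks)
      (pbigmeet L (sum_list ks) (map (\<lambda>i. psub L (cyl ks i) (sum_list ks) (rs i)) [0..<length ks]))
      (pbigjoin L (sum_list ks) (map (\<lambda>i. psub L (cyl ks i) (sum_list ks) (ss i)) [0..<length ks]))"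
  shows "\<exists>i<length ks. ple L (ks ! i) (rs i) (ss i)"
  using assms by (intro ax0[unfolded axiom0_def Let_def, rule_format]) auto

lemma zero_ne_one_sort0: "pzero L 0 \<noteq> pone L 0"
proof
  assume "pzero L 0 = pone L 0"
  then have "ple L 0 (pone L 0) (pzero L 0)" using sort.le_refl[of "pone L 0" 0] closed by simp
  then show False using axiom0D[of "[]"] by (simp add: pbigmeet_def pbigjoin_def)
qed

lemma sort0_cases:
  assumes x: "x \<in> pcar L 0"
  shows "x = pzero L 0 \<or> x = pone L 0"
proof -
  \<comment> \<open>Axiom (0) for two components of arity 0, applied to \<open>x \<and> 1 \<le> 0 \<or> x\<close>.\<close>
  define ks :: "nat list" where "ks = [0, 0]"
  define rs where "rs i = (if i = 0 then x else pone L 0)" for i :: nat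
  define ss where "ss i = (if i = 0 then pzero L 0 else x)" for i :: nat
  have ks: "sum_list ks = 0" "[0..<length ks] = [0, 1]" "cyl ks 0 = []" "cyl ks (Suc 0) = []"
    by (simp_all add: ks_def cyl_def upt_rec)
  have ks_nth: "\<And>i. i < length ks \<Longrightarrow> ks ! i = 0"
    unfolding ks_def by (auto simp: less_Suc_eq)
  have car: "rs i \<in> pcar L 0" "ss i \<in> pcar L 0" for i
    using x closed by (simp_all add: rs_def ss_def)
  have "pbigmeet L 0 [x, pone L 0] = x" "pbigjoin L 0 [pzero L 0, x] = x"
    using x closed
    by (simp_all add: pbigmeet_def pbigjoin_def sort.meet_idem sort.meet_one sort.join_zero
        sort.join_comm[of "pzero L 0"])
  then have "ple L (sum_list ks)
      (pbigmeet L (sum_list ks) (map (\<lambda>i. psub L (cyl ks i) (sum_list ks) (rs i)) [0..<length ks]))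
      (pbigjoin L (sum_list ks) (map (\<lambda>i. psub L (cyl ks i) (sum_list ks) (ss i)) [0..<length ks]))"
    using sort.le_refl[OF x] car by (simp add: ks psub_Nil) (simp add: rs_def ss_def)
  then obtain i where "i < length ks" "ple L 0 (rs i) (ss i)"
    using axiom0D[of ks rs ss] car ks_nth by auto
  then have "ple L 0 x (pzero L 0) \<or> ple L 0 (pone L 0) x"
    by (cases "i = 0") (simp_all add: rs_def ss_def)
  then show ?thesis
    using sort.le_antisym[OF x] sort.zero_le[OF x] sort.le_one[OF x] closed(1,2) by force
qed

lemma prime_filter_cylinders:
  assumes "\<forall>i<length ks.
    rs i \<in> pcar L (ks ! i) \<and> ss i \<in> pcar L (ks ! i) \<and> \<not> ple L (ks ! i) (rs i) (ss i)"
  shows "\<exists>P. sort.prime_filter (sum_list ks) P \<and> (\<forall>i<length ks.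
    psub L (cyl ks i) (sum_list ks) (rs i) \<in> P \<and> psub L (cyl ks i) (sum_list ks) (ss i) \<notin> P)"
proof -
  define n where "n = sum_list ks"
  define cyl_rs where "cyl_rs = map (\<lambda>i. psub L (cyl ks i) n (rs i)) [0..<length ks]"
  define cyl_ss where "cyl_ss = map (\<lambda>i. psub L (cyl ks i) n (ss i)) [0..<length ks]"
  have cyl_closed: "set cyl_rs \<subseteq> pcar L n" "set cyl_ss \<subseteq> pcar L n"
    using assms closed(5)[OF subst_sym_cyl] unfolding cyl_rs_def cyl_ss_def n_def by auto
  have "\<not> ple L n (pbigmeet L n cyl_rs) (pbigjoin L n cyl_ss)"
    using axiom0D[of ks rs ss] assms unfolding cyl_rs_def cyl_ss_def n_def by blast
  then obtain P where P: "sort.prime_filter n P" "pbigmeet L n cyl_rs \<in> P" "pbigjoin L n cyl_ss \<notin> P"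
    using sort.prime_filter_separation pbigmeet_closed[OF alg] pbigjoin_closed[OF alg] cyl_closed
    by (metis sort_le)
  then have "\<forall>c\<in>set cyl_rs. c \<in> P" "\<forall>c\<in>set cyl_ss. c \<notin> P"
    using sort.prime_filter_foldr_meet[OF P(1) cyl_closed(1)]
      sort.prime_filter_foldr_join[OF P(1) cyl_closed(2)]
    by (auto simp: pbigmeet_def pbigjoin_def)
  then show ?thesis using P(1) unfolding cyl_rs_def cyl_ss_def n_def by auto
qed

lemma pqf_model_prime_filter:
  assumes P: "sort.prime_filter N P" and f: "\<And>e. e \<in> W \<Longrightarrow> f e \<in> {1..N}"
  shows "pqf_model L W (\<lambda>x r. psub L (map f x) N r \<in> P)"
  unfolding pqf_model_def
proof (intro allI impI conjI ballI)
  fix x assume "set x \<subseteq> W"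
  then have fx: "subst_sym (map f x) N" using f by (auto simp: subst_sym_def)
  have P_prime: "pmeet L N u v \<in> P \<longleftrightarrow> u \<in> P \<and> v \<in> P" "pjoin L N u v \<in> P \<longleftrightarrow> u \<in> P \<or> v \<in> P"
    if "u \<in> pcar L N" "v \<in> pcar L N" for u v
    using P that unfolding sort.prime_filter_def by blast+
  show "psub L (map f x) N (pone L (length x)) \<in> P" "psub L (map f x) N (pzero L (length x)) \<notin> P"
    using psub_one[OF fx] psub_zero[OF fx] P unfolding sort.prime_filter_def by auto
  fix r s assume "r \<in> pcar L (length x)" "s \<in> pcar L (length x)"
  then show "psub L (map f x) N (pjoin L (length x) r s) \<in> P \<longleftrightarrow>
      psub L (map f x) N r \<in> P \<or> psub L (map f x) N s \<in> P"
    and "psub L (map f x) N (pmeet L (length x) r s) \<in> P \<longleftrightarrow>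
      psub L (map f x) N r \<in> P \<and> psub L (map f x) N s \<in> P"
    using psub_join[OF fx] psub_meet[OF fx] P_prime closed(5)[OF fx] by simp_all
next
  fix x a r assume "set x \<subseteq> W" and a: "subst_sym a (length x)" and r: "r \<in> pcar L (length a)"
  then have fx: "subst_sym (map f x) N" using f by (auto simp: subst_sym_def)
  have "map f (tuple_subst a x) = subst_comp (map f x) a"
    using a by (simp add: map_tuple_subst subst_comp_eq_tuple_subst subst_sym_def)
  then show "psub L (map f (tuple_subst a x)) N r \<in> P \<longleftrightarrow>
      psub L (map f x) N (psub L a (length x) r) \<in> P"
    using psub_subst_comp[of a "map f x" N r] a fx r by simp
qed

definition nonle_triples :: "(nat \<times> 'a \<times> 'a) set" where
  "nonle_triples = {(n, r, s). r \<in> pcar L n \<and> s \<in> pcar L n \<and> \<not> ple L n r s}"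

lemma prime_filter_sort0: "sort.prime_filter 0 {pone L 0}"
  unfolding sort.prime_filter_def
proof (intro conjI ballI)
  fix x y assume x: "x \<in> pcar L 0" and y: "y \<in> pcar L 0"
  have meet: "pmeet L 0 (pzero L 0) z = pzero L 0" "pmeet L 0 (pone L 0) z = z"
    and join: "pjoin L 0 (pzero L 0) z = z" "pjoin L 0 (pone L 0) z = pone L 0"
    if "z \<in> pcar L 0" for z
  proof -
    show "pmeet L 0 (pzero L 0) z = pzero L 0" using sort.zero_le[OF that] by (simp add: ple_def)
    show "pmeet L 0 (pone L 0) z = z"
      using sort.meet_comm[OF closed(2) that] sort.meet_one[OF that] by simp
    show "pjoin L 0 (pzero L 0) z = z"
      using sort.join_comm[OF closed(1) that] sort.join_zero[OF that] by simp
    show "pjoin L 0 (pone L 0) z = pone L 0"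
      using sort.le_one[OF that] sort.le_iff_join[OF that closed(2)]
        sort.join_comm[OF closed(2) that]
      by simp
  qed
  show "(pmeet L 0 x y \<in> {pone L 0}) = (x \<in> {pone L 0} \<and> y \<in> {pone L 0})"
    "(pjoin L 0 x y \<in> {pone L 0}) = (x \<in> {pone L 0} \<or> y \<in> {pone L 0})"
    using sort0_cases[OF x] meet[OF y] join[OF y] zero_ne_one_sort0 by auto
qed (use closed zero_ne_one_sort0 in auto)

lemma sort_trivial_above_0:
  assumes "pzero L 1 = pone L 1" "0 < n" "r \<in> pcar L n"
  shows "r = pzero L n"
proof -
  have "subst_sym [1] n" using assms(2) by (simp add: subst_sym_def)
  then have "pzero L n = pone L n" using psub_zero psub_one assms(1) by force
  have "r = pmeet L n r (pone L n)" using sort.meet_one[OF assms(3)] by simp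
  also have "\<dots> = pmeet L n (pzero L n) r"
    using \<open>pzero L n = pone L n\<close> sort.meet_comm[OF assms(3) closed(1)] by simp
  also have "\<dots> = pzero L n" using sort.zero_le[OF assms(3)] by (simp add: ple_def)
  finally show ?thesis .
qed

text \<open>If sort 1 is trivial then so is every positive sort, and \<open>W = {}\<close> works: the only tuple
  left is the empty one, and sort 0 is \<open>{0, 1}\<close>.\<close>

lemma iso_to_sub_of_A_empty:
  assumes "pzero L 1 = pone L 1"
  shows "iso_to_sub_of_A L ({} :: 'e set)"
proof -
  define M :: "'e list \<Rightarrow> 'a \<Rightarrow> bool" where "M x r \<longleftrightarrow> psub L (map (\<lambda>_. 0) x) 0 r \<in> {pone L 0}" for x r
  have "pqf_model L {} M"
    unfolding M_def by (rule pqf_model_prime_filter[OF prime_filter_sort0]) simp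
  moreover have "\<exists>x\<in>tuples {} n. M x r \<and> \<not> M x s"
    if "r \<in> pcar L n" "s \<in> pcar L n" "\<not> ple L n r s" for n r s
  proof (cases "n = 0")
    case True
    have "r \<noteq> pzero L 0" using that(2,3) sort.zero_le[of s 0] True by auto
    moreover have "s \<noteq> pone L 0" using that(1,3) sort.le_one[of r 0] True by auto
    ultimately have "r = pone L 0" "s = pzero L 0" using sort0_cases that(1,2) True by auto
    then show ?thesis using True zero_ne_one_sort0 closed by (auto simp: M_def tuples_def psub_Nil)
  next
    case False
    then have "r = s"
      using sort_trivial_above_0[OF assms _ that(1)] sort_trivial_above_0[OF assms _ that(2)]
      by simp
    then show ?thesis using sort.le_refl[OF that(1)] that(3) by simp
  qed
  ultimately show ?thesis
    using rel_embedding_of_separating_model[OF alg ax1] iso_to_sub_of_A_iff_rel_embedding[OF alg]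
    by blast
qed

lemma prime_filter_separating_list:
  assumes nontrivial: "pzero L 1 \<noteq> pone L 1" and qs: "set qs \<subseteq> nonle_triples"
  defines "N \<equiv> Suc (sum_list (map fst qs))"
  shows "\<exists>P. sort.prime_filter N P \<and> (\<forall>i<length qs. \<forall>n r s. qs ! i = (n, r, s) \<longrightarrow>
    psub L (cyl (map fst qs) i) N r \<in> P \<and> psub L (cyl (map fst qs) i) N s \<notin> P)"
proof -
  \<comment> \<open>The extra component of sort 1, where \<open>1 \<le> 0\<close> fails, makes the target sort positive; this
    leaves a variable for the elements outside the witness tuples.\<close>
  define ks where "ks = map fst qs @ [1]"
  define rs where "rs i = (if i < length qs then fst (snd (qs ! i)) else pone L 1)" for i
  define ss where "ss i = (if i < length qs then snd (snd (qs ! i)) else pzero L 1)" for i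
  have "\<not> ple L 1 (pone L 1) (pzero L 1)"
    using nontrivial sort.meet_comm[OF closed(2) closed(1)] sort.meet_one[OF closed(1)]
    by (simp add: ple_def)
  moreover have "ks ! length qs = 1" by (simp add: ks_def nth_append)
  moreover have "rs i \<in> pcar L (ks ! i) \<and> ss i \<in> pcar L (ks ! i) \<and> \<not> ple L (ks ! i) (rs i) (ss i)"
    if "i < length qs" for i
    using that qs nth_mem[OF that]
    by (cases "qs ! i") (auto simp: ks_def rs_def ss_def nth_append nonle_triples_def)
  ultimately have "\<forall>i<length ks. rs i \<in> pcar L (ks ! i) \<and> ss i \<in> pcar L (ks ! i) \<and>
      \<not> ple L (ks ! i) (rs i) (ss i)"
    using closed(1,2) by (auto simp: ks_def less_Suc_eq rs_def ss_def)
  from prime_filter_cylinders[OF this] obtain P where P: "sort.prime_filter N P"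
    and P_cyl: "\<forall>i<length ks. psub L (cyl ks i) N (rs i) \<in> P \<and> psub L (cyl ks i) N (ss i) \<notin> P"
    unfolding N_def by (auto simp: ks_def)
  have "psub L (cyl (map fst qs) i) N r \<in> P \<and> psub L (cyl (map fst qs) i) N s \<notin> P"
    if i: "i < length qs" "qs ! i = (n, r, s)" for i n r s
  proof -
    have "i < length ks" "cyl ks i = cyl (map fst qs) i" "rs i = r" "ss i = s"
      using i by (simp_all add: ks_def cyl_append rs_def ss_def)
    then show ?thesis using P_cyl by auto
  qed
  with P show ?thesis by blast
qed

lemma finite_nonle_triples_model:
  assumes "pzero L 1 \<noteq> pone L 1" "finite Q" "Q \<subseteq> nonle_triples"
  shows "\<exists>M. pqf_model L UNIV M \<and>
    (\<forall>(n, r, s)\<in>Q. M (witness_tuple (n, r, s)) r \<and> \<not> M (witness_tuple (n, r, s)) s)"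
proof -
  obtain qs where qs: "distinct qs" "set qs = Q" using finite_distinct_list[OF assms(2)] by blast
  define N where "N = Suc (sum_list (map fst qs))"
  obtain P where P: "sort.prime_filter N P" and P_sep: "\<forall>i<length qs. \<forall>n r s. qs ! i = (n, r, s) \<longrightarrow>
      psub L (cyl (map fst qs) i) N r \<in> P \<and> psub L (cyl (map fst qs) i) N s \<notin> P"
    using prime_filter_separating_list[OF assms(1), of qs] qs(2) assms(3) unfolding N_def by blast
  define y where "y = concat (map witness_tuple qs)"
  have y: "distinct y" "length y = sum_list (map fst qs)"
    using distinct_concat_witness_tuples[OF qs(1)] by (simp_all add: y_def length_concat comp_def)
  then obtain f where f: "\<And>e. f e \<in> {1..N}" and map_f_y: "map f y = subst_id (length y)"
    using position_function unfolding N_def by metis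
  define M where "M x r \<longleftrightarrow> psub L (map f x) N r \<in> P" for x r
  have model: "pqf_model L UNIV M" unfolding M_def by (rule pqf_model_prime_filter[OF P f])
  have map_f: "map f (witness_tuple (qs ! i)) = cyl (map fst qs) i" if i: "i < length qs" for i
  proof -
    have "witness_tuple (qs ! i) = tuple_subst (cyl (map fst qs) i) y"
      using tuple_subst_cyl_concat[of i "map witness_tuple qs"] i by (simp add: y_def comp_def)
    moreover have "subst_sym (cyl (map fst qs) i) (length y)"
      using subst_sym_cyl[of i "map fst qs"] i y(2) by simp
    ultimately show ?thesis
      using map_tuple_subst[of _ y f] map_f_y tuple_subst_subst_id by (simp add: subst_sym_def)
  qed
  have "M (witness_tuple (n, r, s)) r \<and> \<not> M (witness_tuple (n, r, s)) s"
    if q: "(n, r, s) \<in> Q" for n r s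
  proof -
    obtain i where i: "i < length qs" "qs ! i = (n, r, s)"
      using q qs(2) by (auto simp: in_set_conv_nth)
    then show ?thesis using P_sep map_f[OF i(1)] by (simp add: M_def)
  qed
  then show ?thesis using model by (intro exI[of _ M]) auto
qed

lemma fin_sat_witness_literals:
  assumes "pzero L 1 \<noteq> pone L 1"
  shows "fin_sat (\<lambda>V. pqf_model L UNIV (\<lambda>x r. V (x, r))) (\<Union>(witness_literals ` nonle_triples))"
  unfolding fin_sat_def
proof (intro allI impI)
  fix \<Psi> assume \<Psi>: "\<Psi> \<subseteq> \<Union>(witness_literals ` nonle_triples)" "finite \<Psi>"
  obtain \<F> where "finite \<F>" "\<F> \<subseteq> witness_literals ` nonle_triples" "\<Psi> \<subseteq> \<Union>\<F>"
    by (rule finite_subset_Union[OF \<Psi>(2,1)])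
  then obtain Q where Q: "Q \<subseteq> nonle_triples" "finite Q" "\<Psi> \<subseteq> \<Union>(witness_literals ` Q)"
    using finite_subset_image[of \<F> witness_literals nonle_triples] by blast
  then obtain M where model: "pqf_model L UNIV M"
    and M: "\<forall>(n, r, s)\<in>Q. M (witness_tuple (n, r, s)) r \<and> \<not> M (witness_tuple (n, r, s)) s"
    using finite_nonle_triples_model[OF assms] by blast
  have "M (fst (fst p)) (snd (fst p)) = snd p" if "p \<in> \<Psi>" for p
  proof -
    obtain q where "q \<in> Q" "p \<in> witness_literals q" using Q(3) \<open>p \<in> \<Psi>\<close> by blast
    then show ?thesis using M by (cases q) (auto simp: witness_literals_def)
  qed
  then show "\<exists>N. pqf_model L UNIV (\<lambda>x r. N (x, r)) \<and> (\<forall>p\<in>\<Psi>. N (fst p) = snd p)"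
    using model by (intro exI[of _ "\<lambda>(x, r). M x r"]) (simp add: case_prod_beta)
qed

lemma iso_to_sub_of_A_nontrivial:
  assumes "pzero L 1 \<noteq> pone L 1"
  shows "iso_to_sub_of_A L (UNIV :: ('a \<times> nat) set set)"
proof -
  obtain V where model: "pqf_model L UNIV (\<lambda>x r. V (x, r))"
    and V: "\<forall>p\<in>\<Union>(witness_literals ` nonle_triples). V (fst p) = snd p"
    using compactness[OF pqf_model_local fin_sat_witness_literals[OF assms]] by blast
  have "\<exists>x\<in>tuples UNIV n. V (x, r) \<and> \<not> V (x, s)"
    if "r \<in> pcar L n" "s \<in> pcar L n" "\<not> ple L n r s" for n r s
  proof -
    have "witness_literals (n, r, s) \<subseteq> \<Union>(witness_literals ` nonle_triples)"
      using that unfolding nonle_triples_def by blast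
    then have "V (witness_tuple (n, r, s), r) \<and> \<not> V (witness_tuple (n, r, s), s)"
      using V by (auto simp: witness_literals_def)
    moreover have "witness_tuple (n, r, s) \<in> tuples UNIV n" by (simp add: tuples_def)
    ultimately show ?thesis by blast
  qed
  then show ?thesis
    using rel_embedding_of_separating_model[OF alg ax1 model]
      iso_to_sub_of_A_iff_rel_embedding[OF alg] by blast
qed

end

theorem theorem3p2:
  fixes L :: "'a pqf_alg"
  assumes "pqf_alg L"
  shows "(axiom0 L \<and> axiom1 L \<and> axiom2 L \<and> axiom3 L \<and> axiom4 L
            \<longrightarrow> (\<exists>W :: ('a \<times> nat) set set. iso_to_sub_of_A L W))
       \<and> (\<forall>W :: 'w set. iso_to_sub_of_A L W
            \<longrightarrow> axiom0 L \<and> axiom1 L \<and> axiom2 L \<and> axiom3 L \<and> axiom4 L)"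
proof (rule conjI; intro allI impI)
  assume "axiom0 L \<and> axiom1 L \<and> axiom2 L \<and> axiom3 L \<and> axiom4 L"
  then interpret pqf_axioms L using assms by unfold_locales auto
  show "\<exists>W :: ('a \<times> nat) set set. iso_to_sub_of_A L W"
  proof (cases "pzero L 1 = pone L 1")
    case True
    then show ?thesis using iso_to_sub_of_A_empty by blast
  next
    case False
    then show ?thesis using iso_to_sub_of_A_nontrivial by blast
  qed
next
  fix W :: "'w set"
  assume "iso_to_sub_of_A L W"
  then obtain h where "rel_embedding L W h"
    using iso_to_sub_of_A_iff_rel_embedding[OF assms] by blast
  then show "axiom0 L \<and> axiom1 L \<and> axiom2 L \<and> axiom3 L \<and> axiom4 L"
    by (rule rel_embedding.satisfies_axioms)
qed

end
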